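(* Let $(X,\mathbb{Z}^k,T)$ be a continuum-wise expansive $\mathbb{Z}^k$-action with expansivity constant $2c>0$. Then there is $\delta>0$ with the following property. If $A\in C(X)$ and $N\ge1$ satisfy $$c\le\max\{\mathrm{diam}\,T^n(A): n\in[-N,N]^k\}\le 2c,$$ then $$\max\{\mathrm{diam}\,T^n(A): n\in\partial[-N,N]^k\}>\delta.$$
   Context: $X$ is a compact metric space with metric $d$, and $T\colon\mathbb{Z}^k\times X\to X$ is a continuous action. $C(X)$ is the set of nonempty connected closed subsets of $X$. A set is nondegenerate if it has at least two points. A constant $c'>0$ is an expansivity constant, and the action is continuum-wise expansive, if for every nondegenerate $A\in C(X)$ there is $n\in\mathbb{Z}^k$ with $\mathrm{diam}\,T^n(A)>c'$. $[-N,N]^k=\{(n_i)\in\mathbb{Z}^k: -N\le n_i\le N\}$ and $\partial[-N,N]^k=\{(n_i)\in[-N,N]^k: n_j\in\{-N,N\}\text{ for some }j\}$. *)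

theory Defs
  imports "HOL-Analysis.Analysis"
begin

text \<open>Z^k is rendered as the lattice type int^'k with 'k a finite index type
(k = CARD('k) >= 1). X is a compact subset of a metric space type.\<close>

definition zk_action :: "'a::metric_space set \<Rightarrow> (int^'k \<Rightarrow> 'a \<Rightarrow> 'a) \<Rightarrow> bool" where
  "zk_action X T \<longleftrightarrow>
     (\<forall>n. T n ` X \<subseteq> X \<and> continuous_on X (T n)) \<and>
     (\<forall>x\<in>X. T 0 x = x) \<and>
     (\<forall>m n. \<forall>x\<in>X. T (m + n) x = T m (T n x))"

definition continua :: "'a::metric_space set \<Rightarrow> 'a set set" where
  "continua X = {A. A \<subseteq> X \<and> A \<noteq> {} \<and> connected A \<and> closed A}"

definition nondegenerate :: "'a set \<Rightarrow> bool" where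
  "nondegenerate A \<longleftrightarrow> (\<exists>x\<in>A. \<exists>y\<in>A. x \<noteq> y)"

definition cw_expansivity_constant ::
  "'a::metric_space set \<Rightarrow> (int^'k \<Rightarrow> 'a \<Rightarrow> 'a) \<Rightarrow> real \<Rightarrow> bool" where
  "cw_expansivity_constant X T c' \<longleftrightarrow> c' > 0 \<and>
     (\<forall>A\<in>continua X. nondegenerate A \<longrightarrow> (\<exists>n. diameter (T n ` A) > c'))"

definition cube :: "nat \<Rightarrow> (int^'k) set" where
  "cube N = {n. \<forall>i. - int N \<le> n $ i \<and> n $ i \<le> int N}"

definition cube_boundary :: "nat \<Rightarrow> (int^'k) set" where
  "cube_boundary N = {n \<in> cube N. \<exists>j. n $ j = - int N \<or> n $ j = int N}"

end

theory Submission
  imports Defs "HOL-Complex_Analysis.Great_Picard"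
begin

text \<open>Suppose no such delta exists. Then there are continua A_m and cubes [-N_m,N_m]^k such that
  all images T^v A_m over the cube have diameter at most 2c, some B_m = T^(n_m) A_m has diameter
  at least c, and the images over the boundary have diameter at most 1/(m+1). A subsequence of
  the B_m converges in the sense of Kuratowski to a continuum C of diameter at least c, so
  expansivity yields w with diam T^w C > 2c. On the other hand n_m + w eventually stays in the
  cube: otherwise n_m lies within |w| of a boundary point b, and by uniform continuity of the
  finitely many maps T^v with |v| <= |w| the set B_m = T^(n_m - b) (T^b A_m) would be small.
  Hence diam T^w B_m <= 2c eventually, and this bound passes to the limit C.\<close>

lemma diameter_leI:
  fixes S :: "'a::metric_space set"
  assumes "S \<noteq> {}" "\<And>x y. x \<in> S \<Longrightarrow> y \<in> S \<Longrightarrow> dist x y \<le> d"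
  shows "diameter S \<le> d"
  using assms by (auto simp: diameter_def intro!: cSUP_least)

lemma infdist_lessE:
  fixes A :: "'a::metric_space set"
  assumes "A \<noteq> {}" "infdist x A < d"
  obtains a where "a \<in> A" "dist x a < d"
  using assms by (auto simp: infdist_def cINF_less_iff)

lemma compact_imp_countable_dense:
  fixes X :: "'a::metric_space set"
  assumes "compact X"
  obtains D where "countable D" "D \<subseteq> X" "\<And>x e. x \<in> X \<Longrightarrow> e > 0 \<Longrightarrow> \<exists>d\<in>D. dist x d < e"
proof -
  have "\<exists>K. K \<subseteq> X \<and> finite K \<and> X \<subseteq> (\<Union>c\<in>K. ball c (1 / real (Suc n)))" for n
    using compactE_image[OF assms, of X "\<lambda>c. ball c (1 / real (Suc n))"] by force
  then obtain K where K: "\<And>n. K n \<subseteq> X \<and> finite (K n) \<and> X \<subseteq> (\<Union>c\<in>K n. ball c (1 / real (Suc n)))"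
    by metis
  show ?thesis
  proof
    show "countable (\<Union>n. K n)" using K by (auto intro: countable_finite)
    show "(\<Union>n. K n) \<subseteq> X" using K by auto
    fix x e assume "x \<in> X" "(e::real) > 0"
    then obtain n where n: "1 / real (Suc n) < e"
      by (metis nat_approx_posE)
    from K[of n] \<open>x \<in> X\<close> obtain c where "c \<in> K n" "dist c x < 1 / real (Suc n)" by auto
    with n show "\<exists>d\<in>(\<Union>n. K n). dist x d < e" by (auto simp: dist_commute intro!: bexI[of _ c])
  qed
qed

lemma finite_uniformly_equicontinuous_on:
  fixes X :: "'a::metric_space set" and f :: "'i \<Rightarrow> 'a \<Rightarrow> 'b::metric_space"
  assumes X: "compact X" and S: "finite S" and cont: "\<And>i. i \<in> S \<Longrightarrow> continuous_on X (f i)" and "e > 0"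
  obtains d where "d > 0" "\<And>i x y. i \<in> S \<Longrightarrow> x \<in> X \<Longrightarrow> y \<in> X \<Longrightarrow> dist x y < d \<Longrightarrow> dist (f i x) (f i y) < e"
proof -
  have "\<exists>d>0. \<forall>i\<in>S. \<forall>x\<in>X. \<forall>y\<in>X. dist x y < d \<longrightarrow> dist (f i x) (f i y) < e"
    using S cont
  proof (induction S rule: finite_induct)
    case empty
    show ?case by (auto intro: exI[of _ 1])
  next
    case (insert i S)
    then obtain d1 where d1: "d1 > 0" "\<forall>i\<in>S. \<forall>x\<in>X. \<forall>y\<in>X. dist x y < d1 \<longrightarrow> dist (f i x) (f i y) < e"
      by auto
    have "uniformly_continuous_on X (f i)"
      using insert.prems X by (auto intro: compact_uniformly_continuous)
    then obtain d2 where d2: "d2 > 0" "\<forall>x\<in>X. \<forall>x'\<in>X. dist x' x < d2 \<longrightarrow> dist (f i x') (f i x) < e"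
      using \<open>e > 0\<close> unfolding uniformly_continuous_on_def by blast
    show ?case
      using d1 d2 by (intro exI[of _ "min d1 d2"]) auto
  qed
  then show ?thesis using that by blast
qed

section \<open>Kuratowski limits\<close>

text \<open>\<open>C\<close> is both the lower and the upper Kuratowski limit of the sets \<open>B m\<close>.\<close>

definition kuratowski_limit :: "(nat \<Rightarrow> 'a::topological_space set) \<Rightarrow> 'a set \<Rightarrow> bool" where
  "kuratowski_limit B C \<longleftrightarrow>
     (\<forall>x\<in>C. \<exists>xs. (\<forall>m. xs m \<in> B m) \<and> xs \<longlonglongrightarrow> x) \<and>
     (\<forall>s ys y. strict_mono s \<longrightarrow> (\<forall>j. ys j \<in> B (s j)) \<longrightarrow> ys \<longlonglongrightarrow> y \<longrightarrow> y \<in> C)"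

lemma kuratowski_limitD:
  assumes "kuratowski_limit B C"
  shows kuratowski_limit_approx: "x \<in> C \<Longrightarrow> \<exists>xs. (\<forall>m. xs m \<in> B m) \<and> xs \<longlonglongrightarrow> x"
    and kuratowski_limit_cluster: "strict_mono s \<Longrightarrow> (\<And>j. ys j \<in> B (s j)) \<Longrightarrow> ys \<longlonglongrightarrow> y \<Longrightarrow> y \<in> C"
  using assms unfolding kuratowski_limit_def by blast+

lemma infdist_convergent_subsequence:
  fixes X :: "'a::metric_space set" and B :: "nat \<Rightarrow> 'a set"
  assumes X: "compact X" and B: "\<And>m. B m \<subseteq> X" "\<And>m. B m \<noteq> {}"
  obtains r where "strict_mono r" "\<And>x. x \<in> X \<Longrightarrow> convergent (\<lambda>m. infdist x (B (r m)))"
proof -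
  obtain D where D: "countable D" "D \<subseteq> X" "\<And>x e. x \<in> X \<Longrightarrow> e > 0 \<Longrightarrow> \<exists>d\<in>D. dist x d < e"
    using compact_imp_countable_dense[OF X] by blast
  have bounded: "norm (infdist x (B m)) \<le> diameter X" if "x \<in> D" for m x
  proof -
    obtain b where "b \<in> B m" using B(2) by blast
    then have "infdist x (B m) \<le> dist x b" by (rule infdist_le)
    also have "\<dots> \<le> diameter X"
      using diameter_bounded_bound[OF compact_imp_bounded[OF X]] that D(2) B(1) \<open>b \<in> B m\<close> by blast
    finally show ?thesis by (simp add: infdist_nonneg)
  qed
  obtain r where r: "strict_mono r" and conv: "\<And>x. x \<in> D \<Longrightarrow> \<exists>l. (\<lambda>m. infdist x (B (r m))) \<longlonglongrightarrow> l"
    using function_convergent_subsequence[of D "\<lambda>m x. infdist x (B m)" "diameter X"] D(1) bounded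
    by blast
  define F where "F m x = infdist x (B (r m))" for m x
  have "Cauchy (\<lambda>m. F m x)" if "x \<in> X" for x
  proof (rule metric_CauchyI)
    fix e :: real assume "e > 0"
    then obtain d where d: "d \<in> D" "dist x d < e/3" using D(3)[OF \<open>x \<in> X\<close>, of "e/3"] by auto
    then have "Cauchy (\<lambda>m. F m d)" using conv by (auto simp: F_def intro: LIMSEQ_imp_Cauchy)
    then obtain M where M: "\<forall>m\<ge>M. \<forall>n\<ge>M. dist (F m d) (F n d) < e/3"
      using \<open>e > 0\<close> metric_CauchyD[of "\<lambda>m. F m d" "e/3"] by force
    \<comment> \<open>each F m is 1-Lipschitz, so the Cauchy property passes from d to the nearby x\<close>
    have Lip: "\<bar>F m x - F m d\<bar> \<le> dist x d" for m
      unfolding F_def by (rule infdist_triangle_abs)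
    have "dist (F m x) (F n x) < e" if "m \<ge> M" "n \<ge> M" for m n
    proof -
      have "\<bar>F m d - F n d\<bar> < e/3" using M that by (auto simp: dist_real_def)
      then show ?thesis using d(2) Lip[of m] Lip[of n] unfolding dist_real_def by linarith
    qed
    then show "\<exists>M. \<forall>m\<ge>M. \<forall>n\<ge>M. dist (F m x) (F n x) < e" by blast
  qed
  with r show ?thesis using that by (auto simp: F_def Cauchy_convergent_iff)
qed

lemma kuratowski_limit_subsequence:
  fixes X :: "'a::metric_space set" and B :: "nat \<Rightarrow> 'a set"
  assumes X: "compact X" and B: "\<And>m. B m \<subseteq> X" "\<And>m. B m \<noteq> {}"
  obtains r C where "strict_mono r" "C \<subseteq> X" "closed C" "kuratowski_limit (\<lambda>m. B (r m)) C"
proof -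
  obtain r where r: "strict_mono r" and conv: "\<And>x. x \<in> X \<Longrightarrow> convergent (\<lambda>m. infdist x (B (r m)))"
    using infdist_convergent_subsequence[of X B, OF X B] by blast
  define F where "F m x = infdist x (B (r m))" for m x
  define g where "g x = lim (\<lambda>m. F m x)" for x
  have Fg: "(\<lambda>m. F m x) \<longlonglongrightarrow> g x" if "x \<in> X" for x
    using conv[OF that] unfolding F_def g_def by (simp add: convergent_LIMSEQ_iff)
  have "dist (g x) (g y) \<le> 1 * dist x y" if "x \<in> X" "y \<in> X" for x y
  proof -
    have "(\<lambda>m. \<bar>F m x - F m y\<bar>) \<longlonglongrightarrow> \<bar>g x - g y\<bar>" by (intro tendsto_rabs tendsto_diff Fg that)
    moreover have "\<forall>m. \<bar>F m x - F m y\<bar> \<le> dist x y" unfolding F_def by (simp add: infdist_triangle_abs)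
    ultimately have "\<bar>g x - g y\<bar> \<le> dist x y" by (meson LIMSEQ_le_const2)
    then show ?thesis by (simp add: dist_real_def)
  qed
  then have "lipschitz_on 1 X g" by (intro lipschitz_onI) auto
  then have "continuous_on X g" by (rule lipschitz_on_continuous_on)
  define C where "C = {x\<in>X. g x = 0}"
  have "closed C"
    unfolding C_def using \<open>continuous_on X g\<close> compact_imp_closed[OF X]
    by (rule continuous_closed_preimage_constant)
  have approx: "\<exists>xs. (\<forall>m. xs m \<in> B (r m)) \<and> xs \<longlonglongrightarrow> x" if "x \<in> C" for x
  proof -
    have "\<exists>a. a \<in> B (r m) \<and> dist x a < F m x + inverse (real (Suc m))" for m
    proof -
      have "infdist x (B (r m)) < F m x + inverse (real (Suc m))" by (simp add: F_def)
      then show ?thesis using infdist_lessE[OF B(2)] by metis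
    qed
    then obtain xs where xs: "\<And>m. xs m \<in> B (r m)" "\<And>m. dist x (xs m) < F m x + inverse (real (Suc m))"
      by metis
    have bound: "(\<lambda>m. F m x + inverse (real (Suc m))) \<longlonglongrightarrow> 0"
      using tendsto_add[OF Fg LIMSEQ_inverse_real_of_nat, of x] that by (simp add: C_def)
    have le: "dist (xs m) x \<le> F m x + inverse (real (Suc m))" for m
      using xs(2)[of m] by (simp add: dist_commute)
    have "(\<lambda>m. dist (xs m) x) \<longlonglongrightarrow> 0"
    proof (rule tendsto_sandwich[OF _ _ tendsto_const bound])
      show "\<forall>\<^sub>F m in sequentially. 0 \<le> dist (xs m) x" by simp
      show "\<forall>\<^sub>F m in sequentially. dist (xs m) x \<le> F m x + inverse (real (Suc m))" using le by simp
    qed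
    then have "xs \<longlonglongrightarrow> x" by (rule tendsto_dist_iff[THEN iffD2])
    with xs(1) show ?thesis by blast
  qed
  have cluster: "y \<in> C" if s: "strict_mono s" and ys: "\<And>j. ys j \<in> B (r (s j))" and lim: "ys \<longlonglongrightarrow> y"
    for s ys y
  proof -
    have "y \<in> X" using closed_sequentially[OF compact_imp_closed[OF X] _ lim] ys B(1) by blast
    have lim0: "(\<lambda>j. dist (ys j) y) \<longlonglongrightarrow> 0" using lim by (rule tendsto_dist_iff[THEN iffD1])
    have le: "F (s j) y \<le> dist (ys j) y" for j
      unfolding F_def using infdist_le[OF ys] by (simp add: dist_commute)
    have "(\<lambda>j. F (s j) y) \<longlonglongrightarrow> 0"
    proof (rule tendsto_sandwich[OF _ _ tendsto_const lim0])
      show "\<forall>\<^sub>F j in sequentially. 0 \<le> F (s j) y" by (simp add: F_def infdist_nonneg)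
      show "\<forall>\<^sub>F j in sequentially. F (s j) y \<le> dist (ys j) y" using le by simp
    qed
    moreover have "(\<lambda>j. F (s j) y) \<longlonglongrightarrow> g y"
      using LIMSEQ_subseq_LIMSEQ[OF Fg[OF \<open>y \<in> X\<close>] s] by (simp add: o_def)
    ultimately show ?thesis using \<open>y \<in> X\<close> LIMSEQ_unique by (auto simp: C_def)
  qed
  have "kuratowski_limit (\<lambda>m. B (r m)) C"
    unfolding kuratowski_limit_def using approx cluster by blast
  moreover have "C \<subseteq> X" by (auto simp: C_def)
  ultimately show ?thesis using that r \<open>closed C\<close> by blast
qed

lemma kuratowski_limit_nonempty:
  fixes X :: "'a::metric_space set"
  assumes "compact X" "kuratowski_limit B C" "\<And>m. B m \<subseteq> X" "\<And>m. B m \<noteq> {}"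
  shows "C \<noteq> {}"
proof -
  have "\<forall>m. \<exists>b. b \<in> B m" using assms(4) by blast
  then obtain bs where bs: "\<And>m. bs m \<in> B m" by metis
  then have "\<forall>m. bs m \<in> X" using assms(3) by blast
  then obtain l t where "strict_mono t" "(bs \<circ> t) \<longlonglongrightarrow> l"
    using seq_compactE[OF compact_imp_seq_compact[OF assms(1)]] by metis
  then have "l \<in> C" using bs by (intro kuratowski_limit_cluster[OF assms(2), of t "bs \<circ> t"]) auto
  then show ?thesis by blast
qed

lemma kuratowski_limit_eventually_subset:
  fixes X :: "'a::metric_space set"
  assumes "compact X" "kuratowski_limit B C" "\<And>m. B m \<subseteq> X" "open U" "C \<subseteq> U"
  shows "\<forall>\<^sub>F m in sequentially. B m \<subseteq> U"
proof (rule ccontr)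
  assume "\<not> ?thesis"
  then have "infinite {m. \<not> B m \<subseteq> U}"
    by (auto simp: eventually_sequentially dest!: finite_nat_set_iff_bounded_le[THEN iffD1])
      (metis Suc_n_not_le_n le_trans)
  then obtain s :: "nat \<Rightarrow> nat" where s: "strict_mono s" "\<And>j. \<not> B (s j) \<subseteq> U"
    using infinite_enumerate by blast
  then have "\<forall>j. \<exists>y. y \<in> B (s j) \<and> y \<notin> U" by blast
  then obtain ys where ys: "\<And>j. ys j \<in> B (s j)" "\<And>j. ys j \<notin> U" by metis
  then have "\<forall>j. ys j \<in> X" using assms(3) by blast
  then obtain l t where lt: "strict_mono t" "(ys \<circ> t) \<longlonglongrightarrow> l"
    using seq_compactE[OF compact_imp_seq_compact[OF assms(1)]] by metis
  have "l \<in> C"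
    using kuratowski_limit_cluster[OF assms(2), of "s \<circ> t" "ys \<circ> t" l] lt ys(1) s(1)
    by (auto intro: strict_mono_o)
  then have "\<forall>\<^sub>F j in sequentially. (ys \<circ> t) j \<in> U"
    using lt(2) assms(4,5) topological_tendstoD by blast
  then show False using ys(2) by (auto simp: eventually_sequentially)
qed

lemma kuratowski_limit_connected:
  fixes X :: "'a::metric_space set"
  assumes "compact X" "kuratowski_limit B C" "\<And>m. B m \<subseteq> X" "\<And>m. connected (B m)" "closed C"
  shows "connected C"
proof (rule ccontr)
  assume "\<not> connected C"
  then obtain U V where UV: "closed U" "closed V" "U \<noteq> {}" "V \<noteq> {}" "U \<union> V = C" "U \<inter> V = {}"
    using connected_closed_set[OF assms(5)] by blast
  obtain O1 O2 where O: "open O1" "open O2" "U \<subseteq> O1" "V \<subseteq> O2" "O1 \<inter> O2 = {}"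
    using metrizable_imp_normal_space[OF metrizable_space_euclidean] UV(1,2,6)
    unfolding normal_space_def by (metis closed_closedin disjnt_def open_openin)
  have "\<forall>\<^sub>F m in sequentially. B m \<subseteq> O1 \<union> O2"
    using kuratowski_limit_eventually_subset[OF assms(1-3)] O UV(5) by blast
  moreover obtain u v where "u \<in> U" "v \<in> V" using UV by blast
  then obtain xs zs where xs: "\<forall>m. xs m \<in> B m" "xs \<longlonglongrightarrow> u" and zs: "\<forall>m. zs m \<in> B m" "zs \<longlonglongrightarrow> v"
    using kuratowski_limit_approx[OF assms(2)] UV(5) by blast
  then have "\<forall>\<^sub>F m in sequentially. xs m \<in> O1" "\<forall>\<^sub>F m in sequentially. zs m \<in> O2"
    using topological_tendstoD O \<open>u \<in> U\<close> \<open>v \<in> V\<close> by blast+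
  ultimately have "\<forall>\<^sub>F m in sequentially. B m \<subseteq> O1 \<union> O2 \<and> xs m \<in> O1 \<and> zs m \<in> O2"
    by (intro eventually_conj)
  then obtain m where "B m \<subseteq> O1 \<union> O2" "xs m \<in> O1" "zs m \<in> O2"
    using eventually_sequentially by auto
  with connectedD[OF assms(4) O(1,2)] O(5) xs(1) zs(1) show False by blast
qed

lemma kuratowski_limit_dist_ge:
  fixes X :: "'a::metric_space set"
  assumes X: "compact X" and lim: "kuratowski_limit B C"
    and B: "\<And>m. B m \<subseteq> X" "\<And>m. compact (B m)" "\<And>m. B m \<noteq> {}" "\<And>m. c \<le> diameter (B m)"
  obtains x y where "x \<in> C" "y \<in> C" "c \<le> dist x y"
proof -
  have "\<exists>p\<in>B m. \<exists>q\<in>B m. dist p q = diameter (B m)" for m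
    using B(2,3) by (rule diameter_compact_attained)
  then obtain p q where pq: "\<And>m. p m \<in> B m" "\<And>m. q m \<in> B m" "\<And>m. dist (p m) (q m) = diameter (B m)"
    by metis
  have "\<forall>m. (p m, q m) \<in> X \<times> X" using pq B(1) by blast
  then obtain l t where t: "strict_mono t" and lt: "((\<lambda>m. (p m, q m)) \<circ> t) \<longlonglongrightarrow> l"
    using seq_compactE[OF compact_imp_seq_compact[OF compact_Times[OF X X]]] by metis
  have p: "(\<lambda>j. p (t j)) \<longlonglongrightarrow> fst l" and q: "(\<lambda>j. q (t j)) \<longlonglongrightarrow> snd l"
    using tendsto_fst[OF lt] tendsto_snd[OF lt] by (simp_all add: o_def)
  have "fst l \<in> C" by (rule kuratowski_limit_cluster[OF lim t _ p]) (rule pq(1))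
  moreover have "snd l \<in> C" by (rule kuratowski_limit_cluster[OF lim t _ q]) (rule pq(2))
  moreover have "c \<le> dist (fst l) (snd l)"
    using pq(3) B(4) by (intro LIMSEQ_le_const[OF tendsto_dist[OF p q]]) metis
  ultimately show ?thesis using that by blast
qed

lemma kuratowski_limit_image_diameter_le:
  fixes X :: "'a::metric_space set" and f :: "'a \<Rightarrow> 'b::metric_space"
  assumes lim: "kuratowski_limit B C" and "C \<noteq> {}" "C \<subseteq> X" "continuous_on X f"
    and B: "\<And>m. B m \<subseteq> X" "\<And>m. compact (B m)"
    and d: "\<forall>\<^sub>F m in sequentially. diameter (f ` B m) \<le> d"
  shows "diameter (f ` C) \<le> d"
proof (rule diameter_leI)
  show "f ` C \<noteq> {}" using \<open>C \<noteq> {}\<close> by simp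
  have f_lim: "(\<lambda>m. f (xs m)) \<longlonglongrightarrow> f x" if "x \<in> C" "\<forall>m. xs m \<in> B m" "xs \<longlonglongrightarrow> x" for x xs
    using that B(1) \<open>C \<subseteq> X\<close>
    by (intro continuous_on_tendsto_compose[OF \<open>continuous_on X f\<close>] always_eventually) auto
  fix a b assume "a \<in> f ` C" "b \<in> f ` C"
  then obtain x y where xy: "x \<in> C" "y \<in> C" "a = f x" "b = f y" by blast
  obtain xs ys where xs: "\<forall>m. xs m \<in> B m" "xs \<longlonglongrightarrow> x" and ys: "\<forall>m. ys m \<in> B m" "ys \<longlonglongrightarrow> y"
    using kuratowski_limit_approx[OF lim] xy(1,2) by metis
  have "bounded (f ` B m)" for m
    using B \<open>continuous_on X f\<close>
    by (metis compact_continuous_image compact_imp_bounded continuous_on_subset)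
  then have le: "dist (f (xs m)) (f (ys m)) \<le> diameter (f ` B m)" for m
    using xs(1) ys(1) by (blast intro: diameter_bounded_bound)
  have "\<forall>\<^sub>F m in sequentially. dist (f (xs m)) (f (ys m)) \<le> d"
    by (rule eventually_mono[OF d]) (use le in \<open>blast intro: order_trans\<close>)
  then show "dist a b \<le> d"
    using tendsto_dist[OF f_lim[OF xy(1) xs] f_lim[OF xy(2) ys]] xy(3,4)
    by (auto intro: tendsto_upperbound)
qed

lemma kuratowski_limit_in_continua:
  fixes X :: "'a::metric_space set" and B :: "nat \<Rightarrow> 'a set"
  assumes X: "compact X" and B: "\<And>m. B m \<in> continua X"
  obtains r C where "strict_mono r" "C \<in> continua X" "kuratowski_limit (\<lambda>m. B (r m)) C"
proof -
  have BX: "B m \<subseteq> X" "B m \<noteq> {}" "connected (B m)" for m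
    using B by (auto simp: continua_def)
  obtain r C where r: "strict_mono r" and C: "C \<subseteq> X" "closed C" "kuratowski_limit (\<lambda>m. B (r m)) C"
    using kuratowski_limit_subsequence[of X B, OF X BX(1,2)] by blast
  have "C \<noteq> {}" using kuratowski_limit_nonempty[OF X C(3)] BX by blast
  moreover have "connected C" using kuratowski_limit_connected[OF X C(3) _ _ C(2)] BX by blast
  ultimately show ?thesis using that r C by (auto simp: continua_def)
qed

section \<open>The action on continua and cubes\<close>

lemma continua_compact:
  assumes "compact X" "A \<in> continua X"
  shows "compact A"
  using assms compact_Int_closed[of X A] by (auto simp: continua_def Int_absorb1)

lemma zk_action_image_image:
  assumes "zk_action X T" "A \<subseteq> X"
  shows "T m ` T n ` A = T (m + n) ` A"
  using assms unfolding zk_action_def by (auto simp: image_iff) (metis subsetD)+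

lemma zk_action_image_continua:
  assumes "compact X" "zk_action X T" "A \<in> continua X"
  shows "T n ` A \<in> continua X"
proof -
  have "continuous_on A (T n)" "T n ` A \<subseteq> X"
    using assms(2,3) by (auto simp: zk_action_def continua_def intro: continuous_on_subset)
  then show ?thesis
    using continua_compact[OF assms(1,3)] assms(3)
    by (auto simp: continua_def intro: compact_imp_closed compact_continuous_image connected_continuous_image)
qed

lemma finite_cube: "finite (cube N :: (int^'k) set)"
proof -
  have "cube N \<subseteq> vec_lambda ` (PiE UNIV (\<lambda>_::'k. {-int N..int N}))"
  proof
    fix v :: "int^'k" assume "v \<in> cube N"
    then have "vec_nth v \<in> PiE UNIV (\<lambda>_. {-int N..int N})" by (auto simp: cube_def PiE_iff)
    then show "v \<in> vec_lambda ` (PiE UNIV (\<lambda>_::'k. {-int N..int N}))"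
      by (metis image_eqI vec_nth_inverse)
  qed
  then show ?thesis by (rule finite_subset) (intro finite_imageI finite_PiE; simp)
qed

lemma finite_cube_boundary: "finite (cube_boundary N :: (int^'k) set)"
  using finite_cube by (rule finite_subset[rotated]) (auto simp: cube_boundary_def)

lemma mem_cube_iff_abs: "v \<in> cube N \<longleftrightarrow> (\<forall>i. \<bar>v $ i\<bar> \<le> int N)"
proof -
  have "(- int N \<le> x \<and> x \<le> int N) \<longleftrightarrow> \<bar>x\<bar> \<le> int N" for x :: int by arith
  then show ?thesis by (simp add: cube_def)
qed

lemma zero_mem_cube: "0 \<in> cube N"
  by (auto simp: cube_def)

lemma ex_cube_mem: "\<exists>L. (w :: int^'k) \<in> cube L"
proof
  have "nat \<bar>w $ i\<bar> \<le> (\<Sum>j\<in>UNIV. nat \<bar>w $ j\<bar>)" for i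
    by (rule member_le_sum) auto
  then have "\<bar>w $ i\<bar> \<le> int (\<Sum>j\<in>UNIV. nat \<bar>w $ j\<bar>)" for i
    by (metis abs_ge_zero int_nat_eq of_nat_le_iff)
  then show "w \<in> cube (\<Sum>j\<in>UNIV. nat \<bar>w $ j\<bar>)"
    unfolding mem_cube_iff_abs by blast
qed

lemma cube_exit_near_boundary:
  fixes n w :: "int^'k"
  assumes n: "n \<in> cube N" and exit: "n + w \<notin> cube N" and w: "w \<in> cube L"
  obtains b where "b \<in> cube_boundary N" "n - b \<in> cube L"
proof -
  from exit obtain j where j: "(n + w) $ j < - int N \<or> (n + w) $ j > int N"
    by (auto simp: cube_def not_le)
  \<comment> \<open>move n onto the face of the cube that n + w crosses\<close>
  define b where "b = (\<chi> i. if i = j then (if (n + w) $ j > int N then int N else - int N) else n $ i)"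
  have "b \<in> cube_boundary N"
    using n unfolding cube_boundary_def cube_def b_def by auto
  moreover have "\<bar>(n - b) $ i\<bar> \<le> \<bar>w $ i\<bar>" for i
  proof (cases "i = j")
    case True
    have "- int N \<le> n $ j" "n $ j \<le> int N" using n by (auto simp: cube_def)
    then show ?thesis using j True unfolding b_def by auto
  qed (simp add: b_def)
  then have "n - b \<in> cube L"
    using w unfolding mem_cube_iff_abs by (meson order_trans)
  ultimately show ?thesis by (rule that)
qed

section \<open>Boundary estimate\<close>

lemma translate_mem_cube_if_small_boundary:
  fixes X :: "'a::metric_space set" and T :: "int^'k \<Rightarrow> 'a \<Rightarrow> 'a" and w :: "int^'k"
  assumes X: "compact X" and act: "zk_action X T" and "e > 0"
  obtains \<delta> where "\<delta> > 0"
    "\<And>A N n. A \<subseteq> X \<Longrightarrow> n \<in> cube N \<Longrightarrow> e < diameter (T n ` A) \<Longrightarrow>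
       (\<And>b. b \<in> cube_boundary N \<Longrightarrow> diameter (T b ` A) < \<delta>) \<Longrightarrow> n + w \<in> cube N"
proof -
  obtain L where w: "w \<in> cube L" using ex_cube_mem by blast
  have T: "continuous_on X (T v)" "T v ` X \<subseteq> X" for v
    using act by (auto simp: zk_action_def)
  obtain \<delta> where "\<delta> > 0" and \<delta>:
      "\<And>v x y. v \<in> cube L \<Longrightarrow> x \<in> X \<Longrightarrow> y \<in> X \<Longrightarrow> dist x y < \<delta> \<Longrightarrow> dist (T v x) (T v y) < e"
    using finite_uniformly_equicontinuous_on[of X "cube L" T, OF X finite_cube T(1) \<open>e > 0\<close>] by blast
  have "n + w \<in> cube N"
    if A: "A \<subseteq> X" and n: "n \<in> cube N" and big: "e < diameter (T n ` A)"
      and small: "\<And>b. b \<in> cube_boundary N \<Longrightarrow> diameter (T b ` A) < \<delta>" for A N n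
  proof (rule ccontr)
    assume "n + w \<notin> cube N"
    then obtain b where b: "b \<in> cube_boundary N" "n - b \<in> cube L"
      using cube_exit_near_boundary[OF n _ w] by blast
    have bounded: "bounded (T v ` A)" for v
      using A T(2) compact_imp_bounded[OF X] by (meson bounded_subset image_mono order_trans)
    obtain x y where xy: "x \<in> A" "y \<in> A" "e < dist (T n x) (T n y)"
      using diameter_lower_bounded[OF bounded \<open>e > 0\<close> big] by blast
    have "dist (T b x) (T b y) < \<delta>"
      using diameter_bounded_bound[OF bounded] xy(1,2) small[OF b(1)] by (meson image_eqI le_less_trans)
    then have "dist (T (n - b) (T b x)) (T (n - b) (T b y)) < e"
      using \<delta>[OF b(2)] xy(1,2) A T(2) by blast
    moreover have "T (n - b) (T b z) = T n z" if "z \<in> A" for z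
      using act that A unfolding zk_action_def by (metis diff_add_cancel subsetD)
    ultimately show False using xy by simp
  qed
  then show ?thesis by (rule that[OF \<open>\<delta> > 0\<close>])
qed

lemma cw_expansive_limit_continuum:
  fixes X :: "'a::metric_space set" and T :: "int^'k \<Rightarrow> 'a \<Rightarrow> 'a" and B :: "nat \<Rightarrow> 'a set"
  assumes X: "compact X" and "c > 0" and exp: "cw_expansivity_constant X T (2 * c)"
    and B: "\<And>m. B m \<in> continua X" "\<And>m. c \<le> diameter (B m)"
  obtains r C w where "strict_mono r" "C \<in> continua X" "kuratowski_limit (\<lambda>m. B (r m)) C"
    "2 * c < diameter (T w ` C)"
proof -
  have BX: "B m \<subseteq> X" "B m \<noteq> {}" "compact (B m)" for m
    using B(1) continua_compact[OF X B(1)] by (auto simp: continua_def)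
  obtain r C where r: "strict_mono r" and C: "C \<in> continua X" and lim: "kuratowski_limit (\<lambda>m. B (r m)) C"
    using kuratowski_limit_in_continua[of X B, OF X B(1)] by blast
  obtain x y where "x \<in> C" "y \<in> C" "c \<le> dist x y"
    using kuratowski_limit_dist_ge[OF X lim BX(1) BX(3) BX(2) B(2)] by blast
  then have "nondegenerate C" using \<open>c > 0\<close> unfolding nondegenerate_def by (metis dist_self not_le)
  with exp C obtain w where "2 * c < diameter (T w ` C)"
    unfolding cw_expansivity_constant_def by blast
  then show ?thesis by (rule that[OF r C lim])
qed

lemma cw_expansive_boundary_diameter:
  fixes X :: "'a::metric_space set" and T :: "int^'k \<Rightarrow> 'a \<Rightarrow> 'a" and c :: real
  assumes X: "compact X" and act: "zk_action X T" and "c > 0"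
    and exp: "cw_expansivity_constant X T (2 * c)"
  shows "\<exists>\<delta>>0. \<forall>A\<in>continua X. \<forall>N n. n \<in> cube N \<longrightarrow> c \<le> diameter (T n ` A) \<longrightarrow>
           (\<forall>v\<in>cube N. diameter (T v ` A) \<le> 2 * c) \<longrightarrow> (\<exists>b\<in>cube_boundary N. \<delta> < diameter (T b ` A))"
proof (rule ccontr)
  assume "\<not> ?thesis"
  then have "\<forall>\<delta>>0. \<exists>A\<in>continua X. \<exists>N n. n \<in> cube N \<and> c \<le> diameter (T n ` A) \<and>
      (\<forall>v\<in>cube N. diameter (T v ` A) \<le> 2 * c) \<and> (\<forall>b\<in>cube_boundary N. diameter (T b ` A) \<le> \<delta>)"
    by (auto simp: not_less) (metis not_le)
  from this[rule_format, of "inverse (real (Suc m))" for m]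
  obtain A N n where A: "\<And>m. A m \<in> continua X" and n: "\<And>m. n m \<in> cube (N m)"
    and big: "\<And>m. c \<le> diameter (T (n m) ` A m)"
    and bounded: "\<And>m v. v \<in> cube (N m) \<Longrightarrow> diameter (T v ` A m) \<le> 2 * c"
    and small: "\<And>m b. b \<in> cube_boundary (N m) \<Longrightarrow> diameter (T b ` A m) \<le> inverse (real (Suc m))"
    by (simp only: inverse_positive_iff_positive of_nat_0_less_iff zero_less_Suc simp_thms) metis
  have AX: "A m \<subseteq> X" for m using A by (simp add: continua_def)
  define B where "B m = T (n m) ` A m" for m
  have B: "B m \<in> continua X" "compact (B m)" for m
    unfolding B_def using zk_action_image_continua[OF X act A] continua_compact[OF X] by blast+
  have "c \<le> diameter (B m)" for m unfolding B_def by (rule big)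
  then obtain r C w where r: "strict_mono r" and C: "C \<in> continua X"
    and lim: "kuratowski_limit (\<lambda>m. B (r m)) C" and w: "2 * c < diameter (T w ` C)"
    using cw_expansive_limit_continuum[where B=B, OF X \<open>c > 0\<close> exp B(1)] by blast
  obtain \<delta> where "\<delta> > 0" and inside: "\<And>A N n'. A \<subseteq> X \<Longrightarrow> n' \<in> cube N \<Longrightarrow> c / 2 < diameter (T n' ` A) \<Longrightarrow>
       (\<And>b. b \<in> cube_boundary N \<Longrightarrow> diameter (T b ` A) < \<delta>) \<Longrightarrow> n' + w \<in> cube N"
    using translate_mem_cube_if_small_boundary[OF X act, of "c / 2" w] \<open>c > 0\<close> by auto
  obtain M where M: "inverse (real (Suc M)) < \<delta>" using reals_Archimedean[OF \<open>\<delta> > 0\<close>] by blast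
  have "diameter (T w ` B (r m)) \<le> 2 * c" if "m \<ge> M" for m
  proof -
    have "inverse (real (Suc (r m))) \<le> inverse (real (Suc M))"
      using seq_suble[OF r, of m] that by (simp add: field_simps)
    have "n (r m) + w \<in> cube (N (r m))"
    proof (rule inside[OF AX n])
      show "c / 2 < diameter (T (n (r m)) ` A (r m))" using big[of "r m"] \<open>c > 0\<close> by linarith
      show "diameter (T b ` A (r m)) < \<delta>" if "b \<in> cube_boundary (N (r m))" for b
        using small[OF that] M \<open>inverse (real (Suc (r m))) \<le> inverse (real (Suc M))\<close> by linarith
    qed
    moreover have "T w ` B (r m) = T (n (r m) + w) ` A (r m)"
      unfolding B_def using zk_action_image_image[OF act AX] by (simp add: add.commute)
    ultimately show ?thesis using bounded by simp
  qed
  then have "diameter (T w ` C) \<le> 2 * c"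
  proof (intro kuratowski_limit_image_diameter_le[OF lim])
    show "C \<noteq> {}" "C \<subseteq> X" using C by (auto simp: continua_def)
    show "continuous_on X (T w)" using act by (simp add: zk_action_def)
  qed (use B in \<open>auto simp: continua_def eventually_sequentially\<close>)
  with w show False by simp
qed

theorem lemma4p3:
  fixes X :: "'a::metric_space set" and T :: "int^'k \<Rightarrow> 'a \<Rightarrow> 'a" and c :: real
  assumes "compact X"
    and "zk_action X T"
    and "c > 0"
    and "cw_expansivity_constant X T (2 * c)"
  shows "\<exists>\<delta>>0. \<forall>A\<in>continua X. \<forall>N::nat. N \<ge> 1 \<longrightarrow>
           c \<le> Max ((\<lambda>n. diameter (T n ` A)) ` cube N) \<longrightarrow>
           Max ((\<lambda>n. diameter (T n ` A)) ` cube N) \<le> 2 * c \<longrightarrow>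
           Max ((\<lambda>n. diameter (T n ` A)) ` cube_boundary N) > \<delta>"
proof -
  obtain \<delta> where "\<delta> > 0" and \<delta>: "\<forall>A\<in>continua X. \<forall>N n. n \<in> cube N \<longrightarrow> c \<le> diameter (T n ` A) \<longrightarrow>
      (\<forall>v\<in>cube N. diameter (T v ` A) \<le> 2 * c) \<longrightarrow> (\<exists>b\<in>cube_boundary N. \<delta> < diameter (T b ` A))"
    using cw_expansive_boundary_diameter[OF assms] by blast
  have "\<delta> < Max ((\<lambda>n. diameter (T n ` A)) ` cube_boundary N)"
    if A: "A \<in> continua X" and lower: "c \<le> Max ((\<lambda>n. diameter (T n ` A)) ` cube N)"
      and upper: "Max ((\<lambda>n. diameter (T n ` A)) ` cube N) \<le> 2 * c" for A N
  proof -
    have fin: "finite ((\<lambda>n. diameter (T n ` A)) ` cube N)" by (simp add: finite_cube)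
    have ne: "(\<lambda>n. diameter (T n ` A)) ` cube N \<noteq> {}" using zero_mem_cube by blast
    obtain n where "n \<in> cube N" "c \<le> diameter (T n ` A)"
      using lower Max_ge_iff[OF fin ne] by blast
    moreover have "\<forall>v\<in>cube N. diameter (T v ` A) \<le> 2 * c"
      using upper Max_le_iff[OF fin ne] by blast
    ultimately obtain b where "b \<in> cube_boundary N" "\<delta> < diameter (T b ` A)"
      using \<delta> A by blast
    then show ?thesis using finite_cube_boundary[of N] by (subst Max_gr_iff) auto
  qed
  with \<open>\<delta> > 0\<close> show ?thesis by blast
qed

end
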